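(* Let $k,p,q$ be integers with $q>0$, $\gcd(p,q)=1$ and $kq-p$ odd, and let $Q=Q_2(L)$ be the involutory quandle with generators $a,b,c$ and defining relations $$R1: c^{ab}=c,\qquad R2: a^{(ca)^q}=b^{(ab)^{(kq-p-1)/2}},\qquad R3: a^{(ac)^q}=b^{(ab)^{(kq-p-1)/2}}.$$ Then the following relations also hold in $Q$: $c^{(ac)^{2q}}=c$; $a^{(ca)^{2q}}=a$; $b^{(cb)^{2q}}=b$; $a^{(ba)^{(kq-p-1)/2}}=b^{(bc)^q}$; $a^{(ca)^i(ba)^jc}=a^{(ca)^ic(ba)^j}$ and $a^{(ca)^i(ab)^jabc}=a^{(ca)^{i+1}(ba)^jb}$ for $0\le i\le q$ and $0\le j\le(\vert kq-p\vert-1)/2$; $c^{(ac)^ia}=c^{(ac)^ib}$ for all $i\ge 0$.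
   Context: An involutory quandle is a set with a binary operation $(x,y)\mapsto x^y$ satisfying $x^x=x$, $(x^y)^y=x$ and $(x^y)^z=(x^z)^{(y^z)}$; a presentation $\langle S\mid R\rangle_2$ denotes the involutory quandle generated by $S$ subject to $R$ and these axioms. Exponents are read left to right: $x^{yz}=(x^y)^z$, and $z^w$ for a word $w$ means successive action by its letters; negative powers are interpreted via $(xy)^{-1}=yx$ (e.g. $(ab)^{m}=(ba)^{-m}$). This presentation is the involutory quandle of $L=L(k,p/q)\cup C$, the two-bridge link built from a block of $k$ half-twists and a rational $p/q$-tangle together with an unknotted axis $C$, in the case $kq-p$ odd. *)

theory Defs
  imports Main
begin

text \<open>An involutory quandle structure on the whole type, with operation f x y = x^y.\<close>
definition invq :: "('a \<Rightarrow> 'a \<Rightarrow> 'a) \<Rightarrow> bool" where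
  "invq f \<longleftrightarrow> (\<forall>x. f x x = x) \<and> (\<forall>x y. f (f x y) y = x) \<and>
     (\<forall>x y z. f (f x y) z = f (f x z) (f y z))"

definition act :: "('a \<Rightarrow> 'a \<Rightarrow> 'a) \<Rightarrow> 'a \<Rightarrow> 'a list \<Rightarrow> 'a" where
  "act f x w = foldl f x w"

text \<open>Integer power of a word; negative powers via (xy)^(-1) = yx, i.e. the reversed word.\<close>
definition wpow :: "'a list \<Rightarrow> int \<Rightarrow> 'a list" where
  "wpow w m = (if 0 \<le> m then concat (replicate (nat m) w)
               else concat (replicate (nat (- m)) (rev w)))"

end

(* Right multiplication by a word w is a permutation x \<mapsto> x^w of the quandle, and two words are
   identified when they induce the same permutation. In an involutory quandle the letter y^w
   induces the same permutation as the word (rev w) y w; in particular y^w = y makes the letter y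
   commute with w. So R1 says that c commutes with ab, and R2, R3 say that a^((ca)^q) and
   a^((ac)^q) are both B = b^((ab)^n), where n = (kq - p - 1)/2. Applying R2 and then R3 backwards
   gives a^((ca)^(2q)) = a, and symmetrically a^((ac)^(2q)) = a, while the word a B is equivalent
   both to a (ca)^q a (ac)^q = (ac)^(2q) and to a (ba)^n b (ab)^n = (ab)^(2n+1). *)

theory Submission imports Defs begin

lemma act_Nil [simp]: "act f x [] = x"
  by (simp add: act_def)

lemma act_Cons [simp]: "act f x (y # w) = act f (f x y) w"
  by (simp add: act_def)

lemma act_append [simp]: "act f x (u @ v) = act f (act f x u) v"
  by (simp add: act_def)

definition same_act :: "('a \<Rightarrow> 'a \<Rightarrow> 'a) \<Rightarrow> 'a list \<Rightarrow> 'a list \<Rightarrow> bool" where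
  "same_act f u v \<longleftrightarrow> (\<forall>x. act f x u = act f x v)"

lemma same_act_refl [simp]: "same_act f u u"
  by (simp add: same_act_def)

lemma same_act_sym: "same_act f u v \<Longrightarrow> same_act f v u"
  by (simp add: same_act_def)

lemma same_act_trans [trans]: "same_act f u v \<Longrightarrow> same_act f v w \<Longrightarrow> same_act f u w"
  by (simp add: same_act_def)

lemma same_act_append:
  "same_act f u u' \<Longrightarrow> same_act f v v' \<Longrightarrow> same_act f (u @ v) (u' @ v')"
  by (simp add: same_act_def)

lemma same_act_Cons: "same_act f u v \<Longrightarrow> same_act f (y # u) (y # v)"
  by (simp add: same_act_def)

lemma same_actD: "same_act f u v \<Longrightarrow> act f x u = act f x v"
  by (simp add: same_act_def)

lemma wpow_of_nat: "wpow w (int k) = concat (replicate k w)"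
  by (simp add: wpow_def)

lemma wpow_0 [simp]: "wpow w 0 = []"
  by (simp add: wpow_def)

lemma wpow_1 [simp]: "wpow w 1 = w"
  by (simp add: wpow_def)

lemma wpow_uminus: "wpow w (- n) = wpow (rev w) n"
  by (simp add: wpow_def)

lemma rev_wpow: "rev (wpow w n) = wpow (rev w) n"
  by (simp add: wpow_def rev_concat rev_map)

lemma wpow_double: "wpow w (2 * n) = wpow (w @ w) n"
proof -
  have "concat (replicate (2 * k) u) = concat (replicate k (u @ u))" for k and u :: "'a list"
    by (induction k) auto
  moreover have "nat (- (2 * n)) = 2 * nat (- n)"
    by simp
  ultimately show ?thesis
    by (simp add: wpow_def nat_mult_distrib)
qed

lemma concat_replicate_snoc: "concat (replicate k w) @ w = w @ concat (replicate k w)"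
  by (induction k) auto

lemma concat_replicate_twist:
  "concat (replicate k [u, v]) @ [u] = u # concat (replicate k [v, u])"
  by (induction k) auto

locale involutory_quandle =
  fixes f :: "'a \<Rightarrow> 'a \<Rightarrow> 'a"
  assumes invq: "invq f"
begin

abbreviation same_act_syntax (infix "\<approx>" 50) where
  "u \<approx> v \<equiv> same_act f u v"

lemma right_cancel [simp]: "f (f x y) y = x"
  using invq by (simp add: invq_def)

lemma right_distrib: "f (f x y) z = f (f x z) (f y z)"
  using invq by (simp add: invq_def)

lemma act_rev_cancel [simp]: "act f (act f x w) (rev w) = x"
  by (induction w arbitrary: x rule: rev_induct) simp_all

lemma act_cancel_rev [simp]: "act f (act f x (rev w)) w = x"
  using act_rev_cancel[of x "rev w"] by simp

lemma same_act_rev: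
  assumes "u \<approx> v" shows "rev u \<approx> rev v"
  unfolding same_act_def
proof
  fix x
  have "act f x (rev u) = act f (act f (act f x (rev u)) v) (rev v)"
    by simp
  also have "\<dots> = act f (act f (act f x (rev u)) u) (rev v)"
    using same_actD[OF assms] by simp
  finally show "act f x (rev u) = act f x (rev v)"
    by simp
qed

lemma same_act_commute_rev:
  assumes "s @ w \<approx> w @ s" shows "s @ rev w \<approx> rev w @ s"
  unfolding same_act_def
proof
  fix x
  have "act f x (s @ rev w) = act f (act f (act f (act f x (rev w)) w) s) (rev w)"
    by simp
  also have "\<dots> = act f (act f (act f (act f x (rev w)) s) w) (rev w)"
    using same_actD[OF assms, of "act f x (rev w)"] by simp
  finally show "act f x (s @ rev w) = act f x (rev w @ s)"
    by simp
qed

lemma same_act_cancel: "u @ y # y # v \<approx> u @ v"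
  by (simp add: same_act_def)

lemma same_act_cancel_Cons: "y # y # v \<approx> v"
  using same_act_cancel[of "[]"] by simp

lemma fixed_pair_eq: "act f x [u, v] = x \<Longrightarrow> f x u = f x v"
  using right_cancel[of "f x u" v] by simp

lemma act_conjugate: "f x (act f y w) = act f x (rev w @ y # w)"
proof (induction w arbitrary: x rule: rev_induct)
  case (snoc z w)
  have "f x (f (act f y w) z) = f (f (f x z) (act f y w)) z"
    using right_distrib[of "f x z" "act f y w" z] by simp
  with snoc show ?case by simp
qed simp

lemma same_act_conjugate: "[act f y w] \<approx> rev w @ y # w"
  by (simp add: same_act_def act_conjugate del: act_append)

lemma fixed_commute:
  assumes "act f y w = y" shows "y # w \<approx> w @ [y]"
proof -
  have "y # w = [y] @ w" by simp
  also have "\<dots> \<approx> (w @ rev w @ [y]) @ w"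
    by (simp add: same_act_def)
  also have "\<dots> = w @ (rev w @ y # w)"
    by simp
  also have "\<dots> \<approx> w @ [act f y w]"
    by (intro same_act_append same_act_refl same_act_sym[OF same_act_conjugate])
  finally show ?thesis using assms by simp
qed

lemma wpow_succ: "wpow w n @ w \<approx> wpow w (n + 1)"
proof (cases n rule: int_cases)
  case (nonneg k)
  then have "n + 1 = int (Suc k)"
    by simp
  with nonneg show ?thesis
    by (simp only: wpow_of_nat) (simp add: concat_replicate_snoc)
next
  case (neg k)
  then have "n = - int (Suc k)" "n + 1 = - int k"
    by simp_all
  then show ?thesis
    by (simp only: wpow_uminus wpow_of_nat)
       (simp add: same_act_def flip: concat_replicate_snoc)
qed

lemma act_wpow_succ: "act f (act f x (wpow w n)) w = act f x (wpow w (n + 1))"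
  using same_actD[OF wpow_succ] by simp

lemma act_wpow_pred: "act f (act f x (wpow w n)) (rev w) = act f x (wpow w (n - 1))"
proof -
  have "act f x (wpow w n) = act f (act f x (wpow w (n - 1))) w"
    using act_wpow_succ[of x w "n - 1"] by simp
  then show ?thesis by simp
qed

lemma act_wpow_add [simp]:
  "act f (act f x (wpow w n)) (wpow w m) = act f x (wpow w (n + m))"
proof (induction m rule: int_induct[where k = 0])
  case (step1 m)
  have "act f (act f x (wpow w n)) (wpow w (m + 1))
      = act f (act f (act f x (wpow w n)) (wpow w m)) w"
    by (rule act_wpow_succ[symmetric])
  also have "\<dots> = act f x (wpow w (n + (m + 1)))"
    using step1.IH act_wpow_succ[of x w "n + m"] by (simp add: add.assoc)
  finally show ?case .
next
  case (step2 m)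
  have "act f (act f x (wpow w n)) (wpow w (m - 1))
      = act f (act f (act f x (wpow w n)) (wpow w m)) (rev w)"
    by (rule act_wpow_pred[symmetric])
  also have "\<dots> = act f x (wpow w (n + (m - 1)))"
    using step2.IH act_wpow_pred[of x w "n + m"] by (simp add: add_diff_eq)
  finally show ?case .
qed simp

lemma wpow_add: "wpow w n @ wpow w m \<approx> wpow w (n + m)"
  by (simp add: same_act_def)

lemma same_act_wpow:
  assumes "u \<approx> v" shows "wpow u n \<approx> wpow v n"
proof -
  have rep: "concat (replicate k u') \<approx> concat (replicate k v')" if "u' \<approx> v'" for k u' v'
    using that by (induction k) (simp_all add: same_act_append)
  show ?thesis
    using rep[OF assms] rep[OF same_act_rev[OF assms]] by (simp add: wpow_def)
qed

lemma commute_wpow: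
  assumes "s @ w \<approx> w @ s" shows "s @ wpow w n \<approx> wpow w n @ s"
proof -
  have rep: "s @ concat (replicate k u) \<approx> concat (replicate k u) @ s"
    if "s @ u \<approx> u @ s" for k u
  proof (induction k)
    case (Suc k)
    have "s @ concat (replicate (Suc k) u) = (s @ u) @ concat (replicate k u)"
      by simp
    also have "\<dots> \<approx> u @ (s @ concat (replicate k u))"
      using same_act_append[OF that same_act_refl] by simp
    also have "\<dots> \<approx> u @ (concat (replicate k u) @ s)"
      using same_act_append[OF same_act_refl Suc.IH] .
    finally show ?case by simp
  qed simp
  show ?thesis
    using rep[OF assms] rep[OF same_act_commute_rev[OF assms]] by (simp add: wpow_def)
qed

lemma fixed_rev: "act f x w = x \<Longrightarrow> act f x (rev w) = x"
  using act_rev_cancel[of x w] by simp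

lemma fixed_wpow:
  assumes "act f x w = x" shows "act f x (wpow w n) = x"
proof -
  have rep: "act f x (concat (replicate k u)) = x" if "act f x u = x" for k u
    using that by (induction k) simp_all
  show ?thesis
    using rep[OF assms] rep[OF fixed_rev[OF assms]] by (simp add: wpow_def)
qed

lemma fixed_wpow_orbit:
  assumes "act f x (wpow w N) = x"
  shows "act f (act f x (wpow w t)) (wpow w N) = act f x (wpow w t)"
proof -
  have "act f (act f x (wpow w t)) (wpow w N) = act f (act f x (wpow w N)) (wpow w t)"
    by (simp add: add.commute)
  with assms show ?thesis by simp
qed

lemma fixed_wpow_double:
  assumes "act f x (wpow w s) = act f x (wpow (rev w) s)"
  shows "act f x (wpow w (2 * s)) = x"
proof -
  have "act f x (wpow w (2 * s)) = act f (act f x (wpow w s)) (wpow w s)"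
    unfolding mult_2 by (rule act_wpow_add[symmetric])
  also have "\<dots> = act f (act f x (rev (wpow w s))) (wpow w s)"
    by (simp only: assms rev_wpow)
  also have "\<dots> = x"
    by (rule act_cancel_rev)
  finally show ?thesis .
qed

lemma wpow_twist: "wpow [u, v] s @ [u] \<approx> u # wpow [v, u] s"
proof (cases "0 \<le> s")
  case True
  then show ?thesis
    using concat_replicate_twist[of "nat s" u v] by (simp add: wpow_def)
next
  case False
  define R where "R = concat (replicate (nat (- s)) [u, v])"
  define R' where "R' = concat (replicate (nat (- s)) [v, u])"
  have "R' @ [u] \<approx> u # u # R' @ [u]"
    by (rule same_act_sym[OF same_act_cancel_Cons])
  also have "\<dots> = ([u] @ R) @ u # u # []"
    using concat_replicate_twist[of "nat (- s)" u v] by (simp add: R_def R'_def)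
  also have "\<dots> \<approx> [u] @ R"
    using same_act_cancel[of "[u] @ R" u "[]"] by simp
  finally show ?thesis
    using False by (simp add: wpow_def R_def R'_def)
qed

lemma conjugate_pair:
  "[u, act f y (wpow [u, v] s)] \<approx> wpow [u, v] s @ u # y # wpow [u, v] s"
proof -
  have "[u, act f y (wpow [u, v] s)] = [u] @ [act f y (wpow [u, v] s)]"
    by simp
  also have "\<dots> \<approx> [u] @ (rev (wpow [u, v] s) @ y # wpow [u, v] s)"
    by (rule same_act_append[OF same_act_refl same_act_conjugate])
  also have "\<dots> = (u # wpow [v, u] s) @ (y # wpow [u, v] s)"
    by (simp add: rev_wpow)
  also have "\<dots> \<approx> (wpow [u, v] s @ [u]) @ (y # wpow [u, v] s)"
    using same_act_append[OF same_act_sym[OF wpow_twist] same_act_refl] .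
  finally show ?thesis by simp
qed

lemma conjugate_pair_self: "[u, act f u (wpow [u, v] s)] \<approx> wpow [u, v] (2 * s)"
proof -
  note conjugate_pair[of u u v s]
  also have "wpow [u, v] s @ u # u # wpow [u, v] s \<approx> wpow [u, v] s @ wpow [u, v] s"
    by (rule same_act_cancel)
  also have "\<dots> \<approx> wpow [u, v] (2 * s)"
    unfolding mult_2 by (rule wpow_add)
  finally show ?thesis .
qed

lemma conjugate_pair_other: "[u, act f v (wpow [u, v] s)] \<approx> wpow [u, v] (2 * s + 1)"
proof -
  note conjugate_pair[of u v v s]
  also have "wpow [u, v] s @ u # v # wpow [u, v] s = (wpow [u, v] s @ [u, v]) @ wpow [u, v] s"
    by simp
  also have "\<dots> \<approx> wpow [u, v] (s + 1) @ wpow [u, v] s"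
    by (rule same_act_append[OF wpow_succ same_act_refl])
  also have "\<dots> \<approx> wpow [u, v] (s + 1 + s)"
    by (rule wpow_add)
  finally show ?thesis
    by simp
qed

end

locale axis_link_quandle = involutory_quandle f for f :: "'a \<Rightarrow> 'a \<Rightarrow> 'a" +
  fixes a b c :: 'a and q n :: int
  assumes R1: "act f c [a, b] = c"
    and R2: "act f a (wpow [c, a] q) = act f b (wpow [a, b] n)"
    and R3: "act f a (wpow [a, c] q) = act f b (wpow [a, b] n)"
begin

lemma c_commute_ab_power: "c # wpow [a, b] s \<approx> wpow [a, b] s @ [c]"
  using commute_wpow[of "[c]" "[a, b]" s] fixed_commute[OF R1] by simp

lemma c_fixed_ab_power: "act f c (wpow [a, b] s) = c"
  by (rule fixed_wpow[OF R1])

lemma bc_same_act_acab: "[b, c] \<approx> [a, c, a, b]"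
proof -
  have "[b, c] \<approx> a # a # [b, c]"
    by (rule same_act_sym[OF same_act_cancel_Cons])
  also have "\<dots> = [a] @ ([a, b] @ [c])"
    by simp
  also have "\<dots> \<approx> [a] @ (c # [a, b])"
    by (rule same_act_append[OF same_act_refl same_act_sym[OF fixed_commute[OF R1]]])
  finally show ?thesis
    by simp
qed

lemma a_fixed_ca: "act f a (wpow [c, a] (2 * q)) = a"
  by (rule fixed_wpow_double) (simp add: R2 R3)

lemma a_fixed_ac: "act f a (wpow [a, c] (2 * q)) = a"
  by (rule fixed_wpow_double) (simp add: R2 R3)

lemma ac_power_same_act_ab_power: "wpow [a, c] (2 * q) \<approx> wpow [a, b] (2 * n + 1)"
proof -
  have "wpow [a, c] (2 * q) \<approx> [a, act f a (wpow [a, c] q)]"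
    by (rule same_act_sym[OF conjugate_pair_self])
  also have "\<dots> = [a, act f b (wpow [a, b] n)]"
    by (simp add: R3)
  also have "\<dots> \<approx> wpow [a, b] (2 * n + 1)"
    by (rule conjugate_pair_other)
  finally show ?thesis .
qed

lemma c_fixed_ac: "act f c (wpow [a, c] (2 * q)) = c"
  using same_actD[OF ac_power_same_act_ab_power] c_fixed_ab_power by simp

lemma ac_orbit_fixed_ab:
  "act f (act f a (wpow [a, c] t)) (wpow [a, b] (2 * n + 1)) = act f a (wpow [a, c] t)"
  using same_actD[OF ac_power_same_act_ab_power, symmetric]
    fixed_wpow_orbit[OF a_fixed_ac] by simp

lemma b_fixed_cb: "act f b (wpow [c, b] (2 * q)) = b"
proof -
  define B where "B = act f a (wpow [a, c] q)"
  have "[c, b, c, b] = [c] @ [b, c] @ [b]"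
    by simp
  also have "\<dots> \<approx> [c] @ [a, c, a, b] @ [b]"
    by (intro same_act_append same_act_refl bc_same_act_acab)
  also have "\<dots> = [c, a, c, a] @ b # b # []"
    by simp
  also have "\<dots> \<approx> [c, a, c, a]"
    using same_act_cancel[of "[c, a, c, a]" b "[]"] by simp
  finally have "wpow [c, b] (2 * q) \<approx> wpow [c, a] (2 * q)"
    using same_act_wpow by (simp add: wpow_double)
  also have "\<dots> = rev (wpow [a, c] (2 * q))"
    by (simp add: rev_wpow)
  also have "\<dots> \<approx> rev (wpow [a, b] (2 * n + 1))"
    by (rule same_act_rev[OF ac_power_same_act_ab_power])
  also have "\<dots> = wpow [b, a] (2 * n + 1)"
    by (simp add: rev_wpow)
  finally have "act f b (wpow [c, b] (2 * q)) = act f b (wpow [b, a] (2 * n + 1))"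
    by (rule same_actD)
  moreover have "b = act f B (wpow [b, a] n)"
    using act_rev_cancel[of b "wpow [a, b] n"] by (simp add: B_def R3 rev_wpow)
  moreover have "act f B (wpow [b, a] (2 * n + 1)) = B"
    using fixed_rev[OF ac_orbit_fixed_ab[of q]] by (simp add: B_def rev_wpow)
  ultimately show ?thesis
    using fixed_wpow_orbit[of B "[b, a]" "2 * n + 1" n] by simp
qed

lemma ab_power_abc: "wpow [a, b] s @ [a, b, c] \<approx> c # wpow [a, b] (s + 1)"
proof -
  have "wpow [a, b] s @ [a, b, c] = (wpow [a, b] s @ [a, b]) @ [c]"
    by simp
  also have "\<dots> \<approx> wpow [a, b] (s + 1) @ [c]"
    by (rule same_act_append[OF wpow_succ same_act_refl])
  also have "\<dots> \<approx> c # wpow [a, b] (s + 1)"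
    by (rule same_act_sym[OF c_commute_ab_power])
  finally show ?thesis .
qed

lemma ba_power_bc: "wpow [b, a] n @ [b, c] \<approx> [a, c] @ wpow [a, b] (n + 1)"
proof -
  have "wpow [b, a] n @ [b, c] = (wpow [b, a] n @ [b]) @ [c]"
    by simp
  also have "\<dots> \<approx> (b # wpow [a, b] n) @ [c]"
    by (rule same_act_append[OF wpow_twist same_act_refl])
  also have "\<dots> = [b] @ (wpow [a, b] n @ [c])"
    by simp
  also have "\<dots> \<approx> [b] @ (c # wpow [a, b] n)"
    by (rule same_act_append[OF same_act_refl same_act_sym[OF c_commute_ab_power]])
  also have "\<dots> = [b, c] @ wpow [a, b] n"
    by simp
  also have "\<dots> \<approx> [a, c, a, b] @ wpow [a, b] n"
    by (rule same_act_append[OF bc_same_act_acab same_act_refl])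
  also have "\<dots> = [a, c] @ (wpow [a, b] 1 @ wpow [a, b] n)"
    by simp
  also have "\<dots> \<approx> [a, c] @ wpow [a, b] (1 + n)"
    by (rule same_act_append[OF same_act_refl wpow_add])
  finally show ?thesis
    by (simp add: add.commute)
qed

lemma b_bc_power:
  "act f b (wpow [b, c] (int j)) = act f a (wpow [a, c] (q + int j) @ wpow [b, a] n)"
proof (induction j)
  case 0
  show ?case
    using act_rev_cancel[of b "wpow [a, b] n"] by (simp add: R3 rev_wpow)
next
  case (Suc j)
  let ?A = "act f a (wpow [a, c] (q + int j + 1))"
  have "act f b (wpow [b, c] (int (Suc j))) = act f b (wpow [b, c] (int j) @ [b, c])"
    using act_wpow_succ[of b "[b, c]" "int j"] by (simp add: add.commute)
  also have "\<dots> = act f a (wpow [a, c] (q + int j) @ wpow [b, a] n @ [b, c])"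
    using Suc.IH by simp
  also have "\<dots> = act f a (wpow [a, c] (q + int j) @ [a, c] @ wpow [a, b] (n + 1))"
    using same_actD[OF ba_power_bc] by simp
  also have "\<dots> = act f ?A (wpow [a, b] (2 * n + 1) @ wpow [a, b] (- n))"
    using act_wpow_succ[of a "[a, c]" "q + int j"] by (simp add: add.commute)
  also have "\<dots> = act f ?A (wpow [b, a] n)"
    using ac_orbit_fixed_ab by (simp add: wpow_uminus)
  finally show ?case
    by (simp add: ac_simps)
qed

lemma a_ba_power_eq_b_bc_power:
  assumes "0 \<le> q" shows "act f a (wpow [b, a] n) = act f b (wpow [b, c] q)"
  using b_bc_power[of "nat q"] assms a_fixed_ac by simp

lemma ca_power_ba_power_c: "wpow [c, a] i @ wpow [b, a] j @ [c] \<approx> wpow [c, a] i @ c # wpow [b, a] j"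
  using same_act_append[OF same_act_refl same_act_sym[OF c_commute_ab_power[of "- j"]]]
  by (simp add: wpow_uminus)

lemma ca_power_ab_power_abc:
  "wpow [c, a] i @ wpow [a, b] j @ [a, b, c] \<approx> wpow [c, a] (i + 1) @ wpow [b, a] j @ [b]"
proof -
  have "wpow [c, a] i @ wpow [a, b] j @ [a, b, c] \<approx> wpow [c, a] i @ c # wpow [a, b] (j + 1)"
    by (rule same_act_append[OF same_act_refl ab_power_abc])
  also have "\<dots> \<approx> wpow [c, a] i @ c # (wpow [a, b] j @ [a, b])"
    by (intro same_act_append[OF same_act_refl] same_act_Cons same_act_sym[OF wpow_succ])
  also have "\<dots> = (wpow [c, a] i @ [c]) @ (wpow [a, b] j @ [a]) @ [b]"
    by simp
  also have "\<dots> \<approx> (wpow [c, a] i @ [c]) @ (a # wpow [b, a] j) @ [b]"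
    by (intro same_act_append same_act_refl wpow_twist)
  also have "\<dots> = (wpow [c, a] i @ [c, a]) @ wpow [b, a] j @ [b]"
    by simp
  also have "\<dots> \<approx> wpow [c, a] (i + 1) @ wpow [b, a] j @ [b]"
    by (rule same_act_append[OF wpow_succ same_act_refl])
  finally show ?thesis .
qed

lemma c_ac_power_fixed_ab: "act f c (wpow [a, c] (int i) @ [a, b]) = act f c (wpow [a, c] (int i))"
proof (induction i)
  case 0
  show ?case using R1 by simp
next
  case (Suc i)
  let ?Y = "act f c (wpow [a, c] (int i))"
  have "wpow [a, c] (int (Suc i)) @ [a, b] \<approx> (wpow [a, c] (int i) @ [a, c]) @ [a, b]"
    using same_act_append[OF same_act_sym[OF wpow_succ[of "[a, c]" "int i"]] same_act_refl]
    by (simp add: add.commute)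
  also have "\<dots> = wpow [a, c] (int i) @ [a, c, a, b]"
    by simp
  also have "\<dots> \<approx> wpow [a, c] (int i) @ [b, c]"
    by (rule same_act_append[OF same_act_refl same_act_sym[OF bc_same_act_acab]])
  finally have "act f c (wpow [a, c] (int (Suc i)) @ [a, b]) = f (f ?Y b) c"
    by (simp add: same_act_def)
  also have "\<dots> = f (f ?Y a) c"
    using fixed_pair_eq[OF Suc.IH[unfolded act_append]] by simp
  also have "\<dots> = act f c (wpow [a, c] (int (Suc i)))"
    using act_wpow_succ[of c "[a, c]" "int i"] by (simp add: add.commute)
  finally show ?case .
qed

lemma c_ac_power_a_eq_b: "act f c (wpow [a, c] (int i) @ [a]) = act f c (wpow [a, c] (int i) @ [b])"
  using fixed_pair_eq[OF c_ac_power_fixed_ab[of i, unfolded act_append]] by simp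

end

theorem lemma4p3:
  fixes k p q :: int and f :: "'a \<Rightarrow> 'a \<Rightarrow> 'a" and a b c :: 'a
  assumes "q > 0" and "gcd p q = 1" and "odd (k * q - p)"
    and "invq f"
    and R1: "act f c [a, b] = c"
    and R2: "act f a (wpow [c, a] q) = act f b (wpow [a, b] ((k * q - p - 1) div 2))"
    and R3: "act f a (wpow [a, c] q) = act f b (wpow [a, b] ((k * q - p - 1) div 2))"
  shows "act f c (wpow [a, c] (2 * q)) = c
    \<and> act f a (wpow [c, a] (2 * q)) = a
    \<and> act f b (wpow [c, b] (2 * q)) = b
    \<and> act f a (wpow [b, a] ((k * q - p - 1) div 2)) = act f b (wpow [b, c] q)
    \<and> (\<forall>i j :: nat. int i \<le> q \<longrightarrow> int j \<le> (\<bar>k * q - p\<bar> - 1) div 2 \<longrightarrow>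
          act f a (wpow [c, a] (int i) @ wpow [b, a] (int j) @ [c])
            = act f a (wpow [c, a] (int i) @ [c] @ wpow [b, a] (int j))
        \<and> act f a (wpow [c, a] (int i) @ wpow [a, b] (int j) @ [a, b, c])
            = act f a (wpow [c, a] (int i + 1) @ wpow [b, a] (int j) @ [b]))
    \<and> (\<forall>i :: nat. act f c (wpow [a, c] (int i) @ [a]) = act f c (wpow [a, c] (int i) @ [b]))"
proof -
  interpret axis_link_quandle f a b c q "(k * q - p - 1) div 2"
    using assms by unfold_locales auto
  have "act f a (wpow [b, a] ((k * q - p - 1) div 2)) = act f b (wpow [b, c] q)"
    using a_ba_power_eq_b_bc_power \<open>q > 0\<close> by simp
  then show ?thesis
    using c_fixed_ac a_fixed_ca b_fixed_cb c_ac_power_a_eq_b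
      same_actD[OF ca_power_ba_power_c] same_actD[OF ca_power_ab_power_abc]
    by (simp del: act_append)
qed

end
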